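(* Let $D_{-}$ denote the difference operator $D_{-}F(z)=F(z)-F(z-1)$, applied coefficientwise to formal power series in the non-commuting variables $Y_1,Y_2,\ldots$ whose coefficients are meromorphic functions of $z$. Then the generating series $H(z)$ of Hurwitz polyzeta functions satisfies \[ D_{-}H(z)=-\sum_{k=1}^{\infty}\frac{Y_{k}}{(z-1)^{k}}\,H(z), \] i.e. $H(z)=H(z-1)-\sum_{k\ge 1}(z-1)^{-k}Y_kH(z)$ as an identity of formal power series (coefficient by coefficient).
   Context: For integers $k_1,\ldots,k_r\ge 1$ with $k_r\ge 2$, the Hurwitz polyzeta function is the meromorphic function of $z$ \[ \zeta(k_1,\ldots,k_r|z)=\sum_{0\le n_1<n_2<\cdots<n_r}\frac{1}{(z+n_1)^{k_1}\cdots(z+n_r)^{k_r}}. \] Let $\{y_j\}_{j\ge1}$ be non-commuting variables. The stuffle product on ${\mathbb Q}\langle y_1,y_2,\ldots\rangle$ is the bilinear product defined inductively by $1*w=w*1=w$ for the empty word $1$ and $y_kw*y_{k'}w'=y_k(w*y_{k'}w')+y_{k'}(y_kw*w')+y_{k+k'}(w*w')$. To a word $y_{k_1}\cdots y_{k_r}$ with $k_r\ge2$ associate $\zeta(y_{k_1}\cdots y_{k_r}|z):=\zeta(k_1,\ldots,k_r|z)$; set $\zeta(1|z)=\zeta(y_1|z):=-\Gamma'(z)/\Gamma(z)$, $\zeta(\text{empty word}|z)=1$, and extend $w\mapsto\zeta(w|z)$ to all words (in particular to words ending in $y_1$) as the homomorphism from the stuffle algebra to meromorphic functions of $z$ determined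 by these values. Let $\{Y_j\}_{j\ge1}$ be non-commuting formal variables, with $Y_{k_1}\cdots Y_{k_r}$ the word corresponding to $y_{k_1}\cdots y_{k_r}$, and define \[ H(z)=\sum_{w}\zeta(w|z)\,W, \] the sum over all words $w$ in the $y_j$ (including the empty word, with coefficient $1$), $W$ being the corresponding word in the $Y_j$. *)

theory Defs
  imports "HOL-Analysis.Analysis"
begin

text \<open>Words in the letters y_1, y_2, ... are represented as lists of natural numbers
  (the letter y_k is the number k); admissible words have all letters \<ge> 1.\<close>

definition is_word :: "nat list \<Rightarrow> bool" where
  "is_word w \<longleftrightarrow> (\<forall>k\<in>set w. 1 \<le> k)"

definition convergent_word :: "nat list \<Rightarrow> bool" where
  "convergent_word w \<longleftrightarrow> is_word w \<and> w \<noteq> [] \<and> 2 \<le> last w"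

definition hurwitz_polyzeta :: "nat list \<Rightarrow> complex \<Rightarrow> complex" where
  "hurwitz_polyzeta ks z =
     infsum (\<lambda>ns. \<Prod>i<length ks. 1 / (z + of_nat (ns ! i)) ^ (ks ! i))
            {ns :: nat list. length ns = length ks \<and> sorted_wrt (<) ns}"

text \<open>Stuffle product; the formal sum of words is represented as a list of words
  (all coefficients are positive integers, given by multiplicities).\<close>
fun stuffle :: "nat list \<Rightarrow> nat list \<Rightarrow> nat list list" where
  "stuffle [] v = [v]"
| "stuffle u [] = [u]"
| "stuffle (a # u) (b # v) =
     map (Cons a) (stuffle u (b # v)) @ map (Cons b) (stuffle (a # u) v)
     @ map (Cons (a + b)) (stuffle u v)"

definition is_hurwitz_stuffle_hom :: "(nat list \<Rightarrow> complex \<Rightarrow> complex) \<Rightarrow> bool" where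
  "is_hurwitz_stuffle_hom F \<longleftrightarrow>
     (\<forall>z. z \<notin> \<int>\<^sub>\<le>\<^sub>0 \<longrightarrow>
        F [] z = 1 \<and>
        F [1] z = - deriv Gamma z / Gamma z \<and>
        (\<forall>w. convergent_word w \<longrightarrow> F w z = hurwitz_polyzeta w z) \<and>
        (\<forall>u v. is_word u \<longrightarrow> is_word v \<longrightarrow>
            F u z * F v z = (\<Sum>w\<leftarrow>stuffle u v. F w z)))"

text \<open>Formal power series in non-commuting variables Y_1, Y_2, ...: coefficient functions
  on words. Product (concatenation/Cauchy product).\<close>
definition nc_mult :: "(nat list \<Rightarrow> complex) \<Rightarrow> (nat list \<Rightarrow> complex) \<Rightarrow> nat list \<Rightarrow> complex" where
  "nc_mult S T w = (\<Sum>i\<le>length w. S (take i w) * T (drop i w))"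

definition H_series :: "(nat list \<Rightarrow> complex \<Rightarrow> complex) \<Rightarrow> complex \<Rightarrow> nat list \<Rightarrow> complex" where
  "H_series F z w = F w z"

definition Ycoef_series :: "complex \<Rightarrow> nat list \<Rightarrow> complex" where
  "Ycoef_series z w = (case w of [k] \<Rightarrow> if 1 \<le> k then - 1 / (z - 1) ^ k else 0 | _ \<Rightarrow> 0)"

definition D_minus :: "(complex \<Rightarrow> nat list \<Rightarrow> complex) \<Rightarrow> complex \<Rightarrow> nat list \<Rightarrow> complex" where
  "D_minus G z w = G z w - G (z - 1) w"

end

theory Submission
  imports Defs
begin

text \<open>
  Write \<open>\<zeta>(w|z)\<close> for \<open>F w z\<close>. For \<open>w = y\<^sub>k u\<close> the claim reads
  \<open>\<zeta>(w|z - 1) = \<zeta>(w|z) + (z - 1)\<^sup>-\<^sup>k \<zeta>(u|z)\<close>, and both sides are characters of the stuffle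
  algebra in \<open>w\<close>. For convergent words the identity is the splitting of the defining sum
  according to whether \<open>n\<^sub>1 = 0\<close>; for \<open>y\<^sub>1\<close> it is the recurrence of the digamma function.
  Two characters agreeing on \<open>y\<^sub>1\<close> and on convergent words agree everywhere: \<open>u * y\<^sub>1\<close> is
  \<open>u y\<^sub>1\<close> plus words that are shorter or end in fewer letters \<open>y\<^sub>1\<close>, which drives an induction.
\<close>

lemma stuffle_Nil2 [simp]: "stuffle u [] = [u]"
  by (cases u) auto

lemma is_word_Cons [simp]: "is_word (a # u) \<longleftrightarrow> 1 \<le> a \<and> is_word u"
  by (simp add: is_word_def)

lemma is_word_stuffle:
  "is_word u \<Longrightarrow> is_word v \<Longrightarrow> w \<in> set (stuffle u v) \<Longrightarrow> is_word w"
proof (induction u v arbitrary: w rule: stuffle.induct)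
  case (3 a u b v)
  from "3.prems"(3) consider (left) w' where "w = a # w'" "w' \<in> set (stuffle u (b # v))"
    | (right) w' where "w = b # w'" "w' \<in> set (stuffle (a # u) v)"
    | (both) w' where "w = (a + b) # w'" "w' \<in> set (stuffle u v)"
    by (auto simp only: stuffle.simps set_append set_map Un_iff image_iff)
  then show ?case
  proof cases
    case left
    with "3.IH"(1)[of w'] "3.prems"(1,2) show ?thesis by simp
  next
    case right
    with "3.IH"(2)[of w'] "3.prems"(1,2) show ?thesis by simp
  next
    case both
    with "3.IH"(3)[of w'] "3.prems"(1,2) show ?thesis by simp
  qed
qed auto

lemma snoc_one_in_stuffle: "u @ [1] \<in> set (stuffle u [1])"
  by (induction u) auto

definition trailing_ones :: "nat list \<Rightarrow> nat" where
  "trailing_ones w = length (takeWhile (\<lambda>x. x = 1) (rev w))"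

lemma trailing_ones_snoc_one [simp]: "trailing_ones (u @ [1]) = Suc (trailing_ones u)"
  by (simp add: trailing_ones_def)

lemma trailing_ones_le_length: "trailing_ones w \<le> length w"
  unfolding trailing_ones_def by (metis length_rev length_takeWhile_le)

lemma trailing_ones_all_ones: "\<forall>y\<in>set w. y = 1 \<Longrightarrow> trailing_ones w = length w"
  by (simp add: trailing_ones_def takeWhile_eq_all_conv[THEN iffD2])

lemma trailing_ones_Cons: "\<exists>y\<in>set w. y \<noteq> 1 \<Longrightarrow> trailing_ones (a # w) = trailing_ones w"
  unfolding trailing_ones_def by (auto simp: takeWhile_append1)

lemma trailing_ones_Cons_ge: "trailing_ones w \<le> trailing_ones (a # w)"
proof (cases "\<forall>y\<in>set w. y = 1")
  case True
  then have "takeWhile (\<lambda>x. x = 1) (rev w @ [a]) = rev w @ takeWhile (\<lambda>x. x = 1) [a]"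
    by (intro takeWhile_append2) auto
  then show ?thesis
    using trailing_ones_le_length[of w] by (simp add: trailing_ones_def)
qed (simp add: trailing_ones_Cons)

lemma stuffle_snoc_one_cases:
  assumes "w \<in> set (stuffle u [1])"
  shows "w = u @ [1] \<or> length w \<le> length u
    \<or> length w = Suc (length u) \<and> trailing_ones w \<le> trailing_ones u"
  using assms
proof (induction u arbitrary: w)
  case (Cons a u)
  have "stuffle (a # u) [1] = map (Cons a) (stuffle u [1]) @ [1 # a # u, Suc a # u]"
    by simp
  with Cons.prems consider (head) w' where "w = a # w'" "w' \<in> set (stuffle u [1])"
    | (one) "w = 1 # a # u" | (plus) "w = Suc a # u"
    by auto
  then show ?case
  proof cases
    case head
    from Cons.IH[OF head(2)] consider "w' = u @ [1]" | "length w' \<le> length u"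
      | "length w' = Suc (length u)" "trailing_ones w' \<le> trailing_ones u"
      by blast
    then show ?thesis
    proof cases
      case 3
      with trailing_ones_le_length[of u] have "\<exists>y\<in>set w'. y \<noteq> 1"
        using trailing_ones_all_ones[of w'] by auto
      with 3 trailing_ones_Cons_ge[of u a] show ?thesis
        by (simp add: head trailing_ones_Cons)
    qed (use head in auto)
  next
    case one
    show ?thesis
    proof (cases "\<forall>y\<in>set (a # u). y = 1")
      case True
      then have "1 # a # u = (a # u) @ [1]"
        by (metis replicate_append_same replicate_length_same)
      then show ?thesis unfolding one by (rule disjI1)
    next
      case False
      then show ?thesis by (simp add: one trailing_ones_Cons)
    qed
  qed simp
qed simp

definition stuffle_character :: "(nat list \<Rightarrow> 'a::comm_semiring_1) \<Rightarrow> bool" where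
  "stuffle_character P \<longleftrightarrow>
     (\<forall>u v. is_word u \<longrightarrow> is_word v \<longrightarrow> P u * P v = (\<Sum>w\<leftarrow>stuffle u v. P w))"

lemma stuffle_characterD:
  "stuffle_character P \<Longrightarrow> is_word u \<Longrightarrow> is_word v \<Longrightarrow> P u * P v = (\<Sum>w\<leftarrow>stuffle u v. P w)"
  by (simp add: stuffle_character_def)

lemma sum_list_map_eq_count_list:
  fixes f :: "'b \<Rightarrow> 'a::semiring_1"
  assumes "\<forall>x\<in>set xs. x \<noteq> w \<longrightarrow> f x = 0"
  shows "(\<Sum>x\<leftarrow>xs. f x) = of_nat (count_list xs w) * f w"
  using assms by (induction xs) (auto simp: algebra_simps)

lemma stuffle_character_eqI:
  fixes P Q :: "nat list \<Rightarrow> 'a::{idom, ring_char_0}"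
  assumes P: "stuffle_character P" and Q: "stuffle_character Q"
    and Nil: "P [] = Q []" and one: "P [1] = Q [1]"
    and convergent: "\<And>w. convergent_word w \<Longrightarrow> P w = Q w"
    and "is_word w"
  shows "P w = Q w"
  using \<open>is_word w\<close>
proof (induction "(length w, trailing_ones w)" arbitrary: w
    rule: wf_induct_rule[OF wf_lex_prod[OF wf_less_than wf_less_than]])
  case (1 w)
  have IH: "P x = Q x" if "is_word x"
      "length x < length w \<or> length x = length w \<and> trailing_ones x < trailing_ones w" for x
    using 1 that by auto
  show ?case
  proof (cases "w = [] \<or> 2 \<le> last w")
    case True
    with Nil convergent "1.prems" show ?thesis by (auto simp: convergent_word_def)
  next
    case False
    then have "w \<noteq> []" by auto
    with "1.prems" have "1 \<le> last w"
      by (simp add: is_word_def)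
    with False have "last w = 1" by simp
    with \<open>w \<noteq> []\<close> obtain u where w: "w = u @ [1]"
      by (metis append_butlast_last_id)
    show ?thesis
    proof (cases "u = []")
      case True
      with w one show ?thesis by simp
    next
      case False
      have u: "is_word u" and one_word: "is_word [1]"
        using "1.prems" w by (simp_all add: is_word_def)
      have "(\<Sum>x\<leftarrow>stuffle u [1]. P x - Q x) = P u * P [1] - Q u * Q [1]"
        using stuffle_characterD[OF P u one_word] stuffle_characterD[OF Q u one_word]
        by (simp add: sum_list_subtractf)
      also have "\<dots> = 0"
        using IH[OF u] one w by simp
      finally have "(\<Sum>x\<leftarrow>stuffle u [1]. P x - Q x) = 0" .
      moreover have "\<forall>x\<in>set (stuffle u [1]). x \<noteq> w \<longrightarrow> P x - Q x = 0"
      proof (intro ballI impI)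
        fix x assume x: "x \<in> set (stuffle u [1])" "x \<noteq> w"
        from stuffle_snoc_one_cases[OF x(1)] x(2) w trailing_ones_snoc_one[of u]
        have "length x < length w \<or> length x = length w \<and> trailing_ones x < trailing_ones w"
          by auto
        with IH is_word_stuffle[OF u one_word x(1)] show "P x - Q x = 0" by simp
      qed
      ultimately have "of_nat (count_list (stuffle u [1]) w) * (P w - Q w) = 0"
        by (simp add: sum_list_map_eq_count_list)
      moreover have "count_list (stuffle u [1]) w \<noteq> 0"
        using snoc_one_in_stuffle[of u] w by (simp add: count_list_0_iff)
      ultimately show ?thesis by simp
    qed
  qed
qed

text \<open>In series notation \<open>head_twist c P\<close> has the coefficients of \<open>(1 + \<Sum>\<^sub>k c\<^sup>k Y\<^sub>k) P\<close>.\<close>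

definition head_twist :: "'a \<Rightarrow> (nat list \<Rightarrow> 'a::comm_semiring_1) \<Rightarrow> nat list \<Rightarrow> 'a" where
  "head_twist c P w = P w + (case w of [] \<Rightarrow> 0 | k # u \<Rightarrow> c ^ k * P u)"

lemma head_twist_Nil [simp]: "head_twist c P [] = P []"
  and head_twist_Cons [simp]: "head_twist c P (k # u) = P (k # u) + c ^ k * P u"
  by (simp_all add: head_twist_def)

lemma sum_list_head_twist_map_Cons:
  "(\<Sum>w\<leftarrow>map (Cons a) ws. head_twist c P w)
     = (\<Sum>w\<leftarrow>map (Cons a) ws. P w) + c ^ a * (\<Sum>w\<leftarrow>ws. P w)"
  by (induction ws) (simp_all add: algebra_simps)

lemma stuffle_character_head_twist:
  assumes P: "stuffle_character P" and "P [] = 1"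
  shows "stuffle_character (head_twist c P)"
  unfolding stuffle_character_def
proof (intro allI impI)
  fix u v :: "nat list" assume u: "is_word u" and v: "is_word v"
  show "head_twist c P u * head_twist c P v = (\<Sum>w\<leftarrow>stuffle u v. head_twist c P w)"
  proof (cases u; cases v)
    fix a u' b v' assume u_eq: "u = a # u'" and v_eq: "v = b # v'"
    have words: "is_word u'" "is_word v'"
      using u v u_eq v_eq by simp_all
    note char = stuffle_characterD[OF P]
    have "(\<Sum>w\<leftarrow>stuffle u v. head_twist c P w) = (\<Sum>w\<leftarrow>stuffle u v. P w)
           + c ^ a * (\<Sum>w\<leftarrow>stuffle u' v. P w) + c ^ b * (\<Sum>w\<leftarrow>stuffle u v'. P w)
           + c ^ (a + b) * (\<Sum>w\<leftarrow>stuffle u' v'. P w)"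
      by (simp add: u_eq v_eq sum_list_head_twist_map_Cons algebra_simps del: map_map)
    also have "\<dots> = head_twist c P u * head_twist c P v"
      unfolding char[OF u v, symmetric] char[OF words(1) v, symmetric]
        char[OF u words(2), symmetric] char[OF words, symmetric]
      by (simp add: u_eq v_eq algebra_simps power_add)
    finally show ?thesis ..
  qed (use assms in simp_all)
qed

definition increasing_tuples :: "nat \<Rightarrow> nat list set" where
  "increasing_tuples r = {ns. length ns = r \<and> sorted_wrt (<) ns}"

definition hurwitz_term :: "nat list \<Rightarrow> complex \<Rightarrow> nat list \<Rightarrow> complex" where
  "hurwitz_term ks z ns = (\<Prod>i<length ks. 1 / (z + of_nat (ns ! i)) ^ (ks ! i))"

lemma hurwitz_polyzeta_eq_infsum:
  "hurwitz_polyzeta ks z = infsum (hurwitz_term ks z) (increasing_tuples (length ks))"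
  unfolding hurwitz_polyzeta_def hurwitz_term_def increasing_tuples_def by simp

lemma hurwitz_polyzeta_Nil [simp]: "hurwitz_polyzeta [] z = 1"
proof -
  have "increasing_tuples 0 = {[]}" by (auto simp: increasing_tuples_def)
  then show ?thesis by (simp add: hurwitz_polyzeta_eq_infsum hurwitz_term_def)
qed

lemma increasing_tuple_positive_eq_map_Suc:
  assumes "ns \<in> increasing_tuples r" and "\<forall>n\<in>set ns. 0 < n"
  shows "ns \<in> map Suc ` increasing_tuples r"
proof
  show "ns = map Suc (map (\<lambda>n. n - 1) ns)"
    using assms(2) by (induction ns) auto
  have "sorted_wrt (\<lambda>m n. m - 1 < n - 1) ns"
    by (rule sorted_wrt_mono_rel[of ns "(<)"]) (use assms in \<open>auto simp: increasing_tuples_def\<close>)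
  then show "map (\<lambda>n. n - 1) ns \<in> increasing_tuples r"
    using assms(1) by (simp add: increasing_tuples_def sorted_wrt_map)
qed

lemma increasing_tuples_Suc:
  "increasing_tuples (Suc m) = (\<lambda>ms. 0 # map Suc ms) ` increasing_tuples m \<union> map Suc ` increasing_tuples (Suc m)"
proof (intro equalityI subsetI)
  fix ns assume ns: "ns \<in> increasing_tuples (Suc m)"
  then obtain a ns' where ns_eq: "ns = a # ns'"
    and tail: "ns' \<in> increasing_tuples m" "\<forall>n\<in>set ns'. a < n"
    by (auto simp: increasing_tuples_def length_Suc_conv)
  show "ns \<in> (\<lambda>ms. 0 # map Suc ms) ` increasing_tuples m \<union> map Suc ` increasing_tuples (Suc m)"
  proof (cases "a = 0")
    case True
    with tail have "ns' \<in> map Suc ` increasing_tuples m"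
      by (intro increasing_tuple_positive_eq_map_Suc) auto
    with True ns_eq show ?thesis by blast
  next
    case False
    with tail ns_eq have "ns \<in> map Suc ` increasing_tuples (Suc m)"
      by (intro increasing_tuple_positive_eq_map_Suc[OF ns]) auto
    then show ?thesis ..
  qed
qed (auto simp: increasing_tuples_def sorted_wrt_map)

lemma hurwitz_term_map_Suc:
  "length ms = length ks \<Longrightarrow> hurwitz_term ks (z - 1) (map Suc ms) = hurwitz_term ks z ms"
  unfolding hurwitz_term_def by (intro prod.cong refl) (simp add: algebra_simps)

lemma hurwitz_term_Cons_zero:
  "length ms = length u \<Longrightarrow>
     hurwitz_term (k # u) (z - 1) (0 # map Suc ms) = (1 / (z - 1)) ^ k * hurwitz_term u z ms"
  unfolding hurwitz_term_def
  by (simp add: prod.lessThan_Suc_shift power_one_over algebra_simps del: prod.lessThan_Suc)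

lemma norm_add_of_nat_lower_bound:
  fixes w :: complex
  assumes "w \<notin> \<int>\<^sub>\<le>\<^sub>0"
  obtains \<delta> where "\<delta> > 0" "\<And>n. \<delta> * (real n + 1) \<le> norm (w + of_nat n)"
proof -
  define N where "N = nat \<lceil>2 * norm w\<rceil> + 1"
  define f where "f n = norm (w + of_nat n) / (real n + 1)" for n
  have f_pos: "f n > 0" for n
  proof -
    have "w + of_nat n \<noteq> 0"
      using assms minus_of_nat_in_nonpos_Ints[of n] by (metis add.commute add_eq_0_iff)
    then show ?thesis by (simp add: f_def)
  qed
  define \<delta> where "\<delta> = min (1/4) (Min (f ` {..<N}))"
  have "f ` {..<N} \<noteq> {}"
    by (simp add: N_def lessThan_empty_iff)
  with f_pos have "\<delta> > 0"
    by (simp add: \<delta>_def)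
  moreover have "\<delta> * (real n + 1) \<le> norm (w + of_nat n)" for n
  proof (cases "n < N")
    case True
    then have "\<delta> \<le> f n"
      unfolding \<delta>_def by (intro min.coboundedI2 Min_le) auto
    then have "\<delta> * (real n + 1) \<le> f n * (real n + 1)"
      by (intro mult_right_mono) auto
    then show ?thesis by (simp add: f_def)
  next
    case False
    have "real n \<le> norm (w + of_nat n) + norm w"
      using norm_triangle_ineq4[of "w + of_nat n" w] by (simp add: norm_of_nat)
    moreover have "2 * norm w + 1 \<le> real n"
      using False unfolding N_def by linarith
    ultimately have "real n + 1 \<le> 4 * norm (w + of_nat n)"
      by linarith
    then have "\<delta> * (real n + 1) \<le> \<delta> * (4 * norm (w + of_nat n))"
      using \<open>\<delta> > 0\<close> by (intro mult_left_mono) auto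
    also have "\<dots> = (4 * \<delta>) * norm (w + of_nat n)"
      by simp
    also have "\<dots> \<le> 1 * norm (w + of_nat n)"
      by (intro mult_right_mono) (auto simp: \<delta>_def)
    finally show ?thesis
      by simp
  qed
  ultimately show ?thesis
    using that by blast
qed

text \<open>The surplus exponent of the largest factor pays for raising every factor to the
  exponent \<open>1 + 1/(m+1) > 1\<close>, which makes the bound summable in each coordinate separately.\<close>

lemma prod_powr_le_prod_power:
  fixes a :: "nat \<Rightarrow> real" and k :: "nat \<Rightarrow> nat"
  assumes a_ge: "\<And>i. 1 \<le> a i" and a_le: "\<And>i. i < m \<Longrightarrow> a i \<le> a m"
    and k_ge: "\<And>i. i < m \<Longrightarrow> 1 \<le> k i" and k_last: "2 \<le> k m"
  shows "(\<Prod>i<Suc m. a i powr (1 + 1 / Suc m)) \<le> (\<Prod>i<Suc m. a i ^ k i)"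
proof -
  define q where "q = 1 / real (Suc m)"
  have a_pos: "0 < a i" for i
    using a_ge[of i] by linarith
  have "(\<Prod>i<Suc m. a i powr q) \<le> (\<Prod>i<Suc m. a m powr q)"
  proof (intro prod_mono conjI)
    fix i assume "i \<in> {..<Suc m}"
    then have "a i \<le> a m"
      using a_le by (auto simp: less_Suc_eq)
    then show "a i powr q \<le> a m powr q"
      using a_pos[of i] by (intro powr_mono2) (auto simp: q_def)
  qed simp
  also have "\<dots> = (a m powr q) ^ Suc m"
    by (simp del: prod.lessThan_Suc)
  also have "\<dots> = a m powr (real (Suc m) * q)"
    using a_pos[of m] by (intro powr_power) simp
  also have "\<dots> = a m"
    using a_pos[of m] by (simp add: q_def)
  finally have root_le: "(\<Prod>i<Suc m. a i powr q) \<le> a m" .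
  have "(\<Prod>i<Suc m. a i powr (1 + q)) = (\<Prod>i<Suc m. a i) * (\<Prod>i<Suc m. a i powr q)"
    using a_pos by (simp add: powr_add prod.distrib abs_of_pos del: prod.lessThan_Suc)
  also have "\<dots> \<le> (\<Prod>i<Suc m. a i) * a m"
    using root_le a_pos by (intro mult_left_mono prod_nonneg) (auto intro: less_imp_le)
  also have "\<dots> = (\<Prod>i<m. a i) * a m ^ 2"
    by (simp add: power2_eq_square)
  also have "\<dots> \<le> (\<Prod>i<m. a i ^ k i) * a m ^ k m"
  proof (intro mult_mono prod_mono conjI)
    show "a i \<le> a i ^ k i" if "i \<in> {..<m}" for i
      using power_increasing[of 1 "k i" "a i"] k_ge[of i] a_ge[of i] that by simp
    show "a m ^ 2 \<le> a m ^ k m"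
      using k_last a_ge[of m] by (intro power_increasing) auto
    show "0 \<le> (\<Prod>i<m. a i ^ k i)"
      using a_pos by (intro prod_nonneg) (simp add: less_imp_le)
  qed (use a_pos in \<open>simp_all add: less_imp_le\<close>)
  also have "\<dots> = (\<Prod>i<Suc m. a i ^ k i)"
    by simp
  finally show ?thesis
    by (simp add: q_def)
qed

lemma increasing_tuple_weight_le:
  assumes ns: "ns \<in> increasing_tuples (length ks)" and ks: "convergent_word ks"
  shows "(\<Prod>i<length ks. 1 / (real (ns ! i) + 1) ^ (ks ! i))
    \<le> (\<Prod>i<length ks. (real (ns ! i) + 1) powr (- (1 + 1 / length ks)))"
proof -
  obtain m where m: "length ks = Suc m"
    using ks by (cases ks) (auto simp: convergent_word_def)
  define a where "a i = real (ns ! i) + 1" for i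
  have a_pos: "0 < a i" for i
    by (simp add: a_def add_nonneg_pos)
  have "a i \<le> a m" if "i < m" for i
    using ns that m sorted_wrt_nth_less[of "(<)" ns i m]
    by (auto simp: a_def increasing_tuples_def)
  moreover have "1 \<le> ks ! i" if "i < m" for i
    using ks that m nth_mem[of i ks] by (auto simp: convergent_word_def is_word_def)
  moreover have "2 \<le> ks ! m"
    using ks m last_conv_nth[of ks] by (auto simp: convergent_word_def)
  ultimately have power_ge: "(\<Prod>i<Suc m. a i powr (1 + 1 / Suc m)) \<le> (\<Prod>i<Suc m. a i ^ (ks ! i))"
    by (intro prod_powr_le_prod_power) (auto simp: a_def)
  have "(\<Prod>i<Suc m. 1 / a i ^ (ks ! i)) = 1 / (\<Prod>i<Suc m. a i ^ (ks ! i))"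
    by (simp add: prod_dividef del: prod.lessThan_Suc)
  also have "\<dots> \<le> 1 / (\<Prod>i<Suc m. a i powr (1 + 1 / Suc m))"
    using power_ge a_pos by (intro divide_left_mono mult_pos_pos prod_pos) (auto simp: less_imp_neq[symmetric])
  also have "\<dots> = (\<Prod>i<Suc m. 1 / a i powr (1 + 1 / Suc m))"
    by (simp add: prod_dividef del: prod.lessThan_Suc)
  also have "\<dots> = (\<Prod>i<Suc m. a i powr (- (1 + 1 / Suc m)))"
    by (intro prod.cong refl) (rule powr_minus_divide[symmetric])
  finally show ?thesis
    by (simp add: m a_def)
qed

lemma summable_on_prod_list_lists:
  fixes g :: "'b \<Rightarrow> real"
  assumes g_nonneg: "\<And>n. g n \<ge> 0" and g_summable: "g summable_on UNIV"
  shows "(\<lambda>ns. prod_list (map g ns)) summable_on {ns. length ns = r}"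
proof (induction r)
  case 0
  have "{ns :: 'b list. length ns = 0} = {[]}" by auto
  then show ?case by simp
next
  case (Suc r)
  define S where "S = infsum (\<lambda>ns. prod_list (map g ns)) {ns. length ns = r}"
  have lists_Suc:
    "{ns :: 'b list. length ns = Suc r} = (\<lambda>(n, ns). n # ns) ` (UNIV \<times> {ns. length ns = r})"
    by (auto simp: length_Suc_conv)
  have inj: "inj_on (\<lambda>(n, ns). n # ns) (UNIV \<times> {ns :: 'b list. length ns = r})"
    by (auto simp: inj_on_def)
  have "(\<lambda>(n, ns). g n * prod_list (map g ns)) summable_on UNIV \<times> {ns. length ns = r}"
  proof (rule summable_on_SigmaI[where g = "\<lambda>n. g n * S"])
    fix n
    have "((\<lambda>ns. g n * prod_list (map g ns)) has_sum g n * S) {ns. length ns = r}"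
      unfolding S_def by (intro has_sum_cmult_right has_sum_infsum Suc.IH)
    then show "((\<lambda>ns. (\<lambda>(n, ns). g n * prod_list (map g ns)) (n, ns)) has_sum g n * S)
        {ns. length ns = r}"
      by simp
  next
    show "(\<lambda>n. g n * S) summable_on UNIV"
      using g_summable by (rule summable_on_cmult_left)
  next
    show "0 \<le> (\<lambda>(n, ns). g n * prod_list (map g ns)) (n, ns)" for n ns
      using g_nonneg by (auto intro!: mult_nonneg_nonneg prod_list_nonneg)
  qed
  then show ?case
    unfolding lists_Suc summable_on_reindex[OF inj] by (simp add: o_def case_prod_unfold)
qed

lemma prod_list_map_eq_prod_nth: "prod_list (map g ns) = (\<Prod>i<length ns. g (ns ! i))"
  by (induction ns) (simp_all add: prod.lessThan_Suc_shift del: prod.lessThan_Suc)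

lemma norm_hurwitz_term_le:
  assumes "\<delta> > 0" and "\<And>n. \<delta> * (real n + 1) \<le> norm (w + of_nat n)"
  shows "norm (hurwitz_term ks w ns)
    \<le> (\<Prod>i<length ks. (1 / \<delta>) ^ (ks ! i)) * (\<Prod>i<length ks. 1 / (real (ns ! i) + 1) ^ (ks ! i))"
proof -
  have "norm (hurwitz_term ks w ns) = (\<Prod>i<length ks. 1 / norm (w + of_nat (ns ! i)) ^ (ks ! i))"
    by (simp add: hurwitz_term_def prod_norm[symmetric] norm_divide norm_power)
  also have "\<dots> \<le> (\<Prod>i<length ks. (1 / \<delta>) ^ (ks ! i) * (1 / (real (ns ! i) + 1) ^ (ks ! i)))"
  proof (intro prod_mono conjI)
    fix i
    have pos: "0 < \<delta> * (real (ns ! i) + 1)"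
      using assms(1) by simp
    moreover note bound = assms(2)[of "ns ! i"]
    ultimately have "0 < norm (w + of_nat (ns ! i))"
      by linarith
    with pos bound assms(1)
    have "1 / norm (w + of_nat (ns ! i)) ^ (ks ! i) \<le> 1 / (\<delta> * (real (ns ! i) + 1)) ^ (ks ! i)"
      by (intro divide_left_mono power_mono mult_pos_pos zero_less_power) auto
    then show "1 / norm (w + of_nat (ns ! i)) ^ (ks ! i)
        \<le> (1 / \<delta>) ^ (ks ! i) * (1 / (real (ns ! i) + 1) ^ (ks ! i))"
      by (simp add: power_mult_distrib power_one_over)
  qed simp
  also have "\<dots> = (\<Prod>i<length ks. (1 / \<delta>) ^ (ks ! i)) * (\<Prod>i<length ks. 1 / (real (ns ! i) + 1) ^ (ks ! i))"
    by (rule prod.distrib)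
  finally show ?thesis .
qed

lemma hurwitz_term_summable:
  assumes ks: "convergent_word ks" and w: "w \<notin> \<int>\<^sub>\<le>\<^sub>0"
  shows "hurwitz_term ks w summable_on increasing_tuples (length ks)"
proof -
  obtain \<delta> where \<delta>: "\<delta> > 0" "\<And>n. \<delta> * (real n + 1) \<le> norm (w + of_nat n)"
    using norm_add_of_nat_lower_bound[OF w] by blast
  define r where "r = length ks"
  define g where "g n = (real n + 1) powr (- (1 + 1 / real r))" for n
  define C where "C = (\<Prod>i<r. (1 / \<delta>) ^ (ks ! i))"
  have "r \<ge> 1"
    using ks by (cases ks) (auto simp: convergent_word_def r_def)
  then have "summable (\<lambda>n. real n powr (- (1 + 1 / real r)))"
    by (subst summable_real_powr_iff) simp
  then have "summable g"
    unfolding g_def by (subst (asm) summable_Suc_iff[symmetric]) (simp add: add.commute)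
  then have "g summable_on UNIV"
    by (subst summable_on_UNIV_nonneg_real_iff) (auto simp: g_def)
  then have "(\<lambda>ns. C * prod_list (map g ns)) summable_on {ns. length ns = r}"
    by (intro summable_on_cmult_right summable_on_prod_list_lists) (auto simp: g_def)
  then have majorant: "(\<lambda>ns. C * prod_list (map g ns)) summable_on increasing_tuples r"
    by (rule summable_on_subset_banach) (auto simp: increasing_tuples_def)
  have "norm (hurwitz_term ks w ns) \<le> C * prod_list (map g ns)" if "ns \<in> increasing_tuples r" for ns
  proof -
    have "norm (hurwitz_term ks w ns) \<le> C * (\<Prod>i<r. 1 / (real (ns ! i) + 1) ^ (ks ! i))"
      using norm_hurwitz_term_le[OF \<delta>] by (simp add: C_def r_def)
    also have "\<dots> \<le> C * (\<Prod>i<r. g (ns ! i))"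
      using increasing_tuple_weight_le[OF _ ks] that
      by (intro mult_left_mono) (auto simp: C_def g_def r_def \<open>\<delta> > 0\<close> less_imp_le intro!: prod_nonneg)
    also have "(\<Prod>i<r. g (ns ! i)) = prod_list (map g ns)"
      using that by (simp add: prod_list_map_eq_prod_nth increasing_tuples_def)
    finally show ?thesis .
  qed
  then have "(\<lambda>ns. norm (hurwitz_term ks w ns)) summable_on increasing_tuples r"
    by (intro summable_on_comparison_test[OF majorant]) auto
  then show ?thesis
    unfolding r_def by (subst summable_on_iff_abs_summable_on_complex)
qed

lemma hurwitz_polyzeta_shift:
  assumes ks: "convergent_word (k # u)" and z: "z - 1 \<notin> \<int>\<^sub>\<le>\<^sub>0"
  shows "hurwitz_polyzeta (k # u) (z - 1)
    = hurwitz_polyzeta (k # u) z + (1 / (z - 1)) ^ k * hurwitz_polyzeta u z"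
proof -
  define m where "m = length u"
  define f where "f = hurwitz_term (k # u) (z - 1)"
  define A0 where "A0 = (\<lambda>ms. 0 # map Suc ms) ` increasing_tuples m"
  define A1 where "A1 = map Suc ` increasing_tuples (Suc m)"
  have split: "increasing_tuples (Suc m) = A0 \<union> A1" "A0 \<inter> A1 = {}"
    unfolding A0_def A1_def by (rule increasing_tuples_Suc) (auto simp: increasing_tuples_def)
  have "f summable_on increasing_tuples (Suc m)"
    using hurwitz_term_summable[OF ks z] by (simp add: f_def m_def)
  then have summable: "f summable_on A0" "f summable_on A1"
    by (auto simp: split intro: summable_on_subset_banach)
  have "hurwitz_polyzeta (k # u) (z - 1) = infsum f (increasing_tuples (Suc m))"
    by (simp add: hurwitz_polyzeta_eq_infsum f_def m_def)
  also have "\<dots> = infsum f A0 + infsum f A1"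
    unfolding split(1) using summable split(2) by (rule infsum_Un_disjoint)
  also have "infsum f A1 = infsum (hurwitz_term (k # u) z) (increasing_tuples (Suc m))"
    unfolding A1_def by (subst infsum_reindex) (auto simp: inj_on_def f_def
        hurwitz_term_map_Suc increasing_tuples_def m_def intro: infsum_cong)
  also have "infsum f A0 = infsum (\<lambda>ms. (1 / (z - 1)) ^ k * hurwitz_term u z ms) (increasing_tuples m)"
    unfolding A0_def by (subst infsum_reindex) (auto simp: inj_on_def f_def
        hurwitz_term_Cons_zero increasing_tuples_def m_def intro: infsum_cong)
  finally show ?thesis
    by (simp add: infsum_cmult_right' hurwitz_polyzeta_eq_infsum m_def)
qed

lemma Gamma_logderiv_diff:
  fixes z :: complex
  assumes "z \<notin> \<int>\<^sub>\<le>\<^sub>0" and "z - 1 \<notin> \<int>\<^sub>\<le>\<^sub>0"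
  shows "deriv Gamma z / Gamma z = deriv Gamma (z - 1) / Gamma (z - 1) + 1 / (z - 1)"
proof -
  have "deriv Gamma x / Gamma x = Digamma x" if "x \<notin> \<int>\<^sub>\<le>\<^sub>0" for x :: complex
    using DERIV_imp_deriv[OF has_field_derivative_Gamma[OF that]] Gamma_nonzero[OF that] by simp
  moreover have "z - 1 \<noteq> 0"
    using assms(2) by auto
  ultimately show ?thesis
    using assms Digamma_plus1[of "z - 1"] by simp
qed

lemma hurwitz_stuffle_hom_shift:
  assumes F: "is_hurwitz_stuffle_hom F"
    and z: "z \<notin> \<int>\<^sub>\<le>\<^sub>0" and z1: "z - 1 \<notin> \<int>\<^sub>\<le>\<^sub>0" and w: "is_word w"
  shows "F w (z - 1) = head_twist (1 / (z - 1)) (\<lambda>v. F v z) w"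
proof (rule stuffle_character_eqI[OF _ _ _ _ _ w])
  note at_z = F[unfolded is_hurwitz_stuffle_hom_def, rule_format, OF z]
  note at_z1 = F[unfolded is_hurwitz_stuffle_hom_def, rule_format, OF z1]
  show "stuffle_character (\<lambda>v. F v (z - 1))"
    using at_z1 by (simp add: stuffle_character_def)
  show "stuffle_character (head_twist (1 / (z - 1)) (\<lambda>v. F v z))"
    using at_z by (intro stuffle_character_head_twist) (simp_all add: stuffle_character_def)
  show "F [] (z - 1) = head_twist (1 / (z - 1)) (\<lambda>v. F v z) []"
    using at_z at_z1 by simp
  show "F [1] (z - 1) = head_twist (1 / (z - 1)) (\<lambda>v. F v z) [1]"
    using at_z at_z1 Gamma_logderiv_diff[OF z z1] by simp
  fix v assume v: "convergent_word v"
  then obtain k u where v_eq: "v = k # u"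
    by (cases v) (auto simp: convergent_word_def)
  have "F u z = hurwitz_polyzeta u z"
  proof (cases "u = []")
    case False
    with v v_eq have "convergent_word u"
      by (auto simp: convergent_word_def is_word_def)
    with at_z show ?thesis by simp
  qed (use at_z in simp)
  with v v_eq at_z at_z1 hurwitz_polyzeta_shift[OF _ z1, of k u]
  show "F v (z - 1) = head_twist (1 / (z - 1)) (\<lambda>v. F v z) v"
    by simp
qed

lemma nc_mult_Nil: "Y [] = 0 \<Longrightarrow> nc_mult Y G [] = 0"
  by (simp add: nc_mult_def)

lemma nc_mult_Cons_letters:
  assumes "Y [] = 0" and "\<And>a b v. Y (a # b # v) = 0"
  shows "nc_mult Y G (k # u) = Y [k] * G u"
proof -
  have "nc_mult Y G (k # u) = (\<Sum>i\<le>length u. Y (k # take i u) * G (drop i u))"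
    using assms(1) by (simp add: nc_mult_def sum.atMost_Suc_shift del: sum.atMost_Suc)
  also have "\<dots> = Y [k] * G u"
    using assms(2) by (cases u) (simp_all add: sum.atMost_shift)
  finally show ?thesis .
qed

theorem theoremA:
  fixes F :: "nat list \<Rightarrow> complex \<Rightarrow> complex" and z :: complex
  assumes "is_hurwitz_stuffle_hom F"
    and "z \<notin> \<int>\<^sub>\<le>\<^sub>0" and "z - 1 \<notin> \<int>\<^sub>\<le>\<^sub>0"
  shows "\<forall>w. is_word w \<longrightarrow>
           D_minus (H_series F) z w = nc_mult (Ycoef_series z) (H_series F z) w"
proof (intro allI impI)
  fix w assume w: "is_word w"
  have shift: "F w (z - 1) = head_twist (1 / (z - 1)) (\<lambda>v. F v z) w"
    using hurwitz_stuffle_hom_shift[OF assms w] .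
  show "D_minus (H_series F) z w = nc_mult (Ycoef_series z) (H_series F z) w"
  proof (cases w)
    case Nil
    with shift show ?thesis
      by (simp add: D_minus_def H_series_def Ycoef_series_def nc_mult_Nil)
  next
    case (Cons k u)
    with w have "1 \<le> k" by simp
    with Cons shift show ?thesis
      by (simp add: D_minus_def H_series_def Ycoef_series_def nc_mult_Cons_letters power_one_over)
  qed
qed

end
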